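(* Let $A$ be the $b\times v$ incidence matrix of a $(v,b,r,k,\lambda)$-BIBD with $k<v$, let $\theta\in(0,1)$, $\alpha_1=\theta/r$, $\alpha_2=(1-\theta)/(b-r)$, and $Q=\alpha_1A+\alpha_2(J_{b\times v}-A)$, and assume $Q$ has rank $v$. Let $\pi$ be the uniform distribution on the $v$ points, let $\rho=Q\pi$ be the induced distribution on the $b$ blocks, and let $D_\rho$ be the $b\times b$ diagonal matrix with $\rho_1,\dots,\rho_b$ on the diagonal. Then the estimator $$L=(Q^TD_\rho^{-1}Q)^{-1}Q^TD_\rho^{-1}$$ is equal to the Moore–Penrose inverse $(Q^TQ)^{-1}Q^T$ of $Q$.
   Context: A $(v,b,r,k,\lambda)$-BIBD is a set system with $v$ points and $b$ blocks, each block of size $k$, each point in exactly $r$ blocks, each pair of distinct points in exactly $\lambda$ blocks. $J_{b\times v}$ is the all-ones matrix. $Q$ is the transition probability matrix of the LDP protocol based on the BIBD. The estimator $(Q^TD_\rho^{-1}Q)^{-1}Q^TD_\rho^{-1}$ is the unbiased linear estimator (left inverse of $Q$) minimizing the risk $\mathsf{trace}(LD_\rho L^T)-\sum_j p_j^2$ among left inverses $L$ of $Q$. *)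

theory Defs
  imports "HOL-Analysis.Analysis"
begin

text \<open>A (v,b,r,k,lambda)-BIBD on the point set UNIV :: 'v set (v = CARD('v)),
  with blocks indexed by 'b (b = CARD('b), repeated blocks allowed):
  block i is the set B i of points.\<close>
definition is_bibd :: "('b::finite \<Rightarrow> 'v::finite set) \<Rightarrow> nat \<Rightarrow> nat \<Rightarrow> nat \<Rightarrow> bool" where
  "is_bibd B r k lam \<longleftrightarrow>
     (\<forall>i. card (B i) = k) \<and>
     (\<forall>x. card {i. x \<in> B i} = r) \<and>
     (\<forall>x y. x \<noteq> y \<longrightarrow> card {i. x \<in> B i \<and> y \<in> B i} = lam)"

definition incidence_matrix :: "('b::finite \<Rightarrow> 'v::finite set) \<Rightarrow> real^'v^'b" where
  "incidence_matrix B = (\<chi> i j. if j \<in> B i then 1 else 0)"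

definition ones_mat :: "real^'n^'m" where
  "ones_mat = (\<chi> i j. 1)"

definition diag_mat :: "real^'n \<Rightarrow> real^'n^'n" where
  "diag_mat d = (\<chi> i j. if i = j then d $ i else 0)"

end

theory Submission
  imports Defs
begin

text \<open>Every block has k points, so all rows of Q have the same sum and the induced
  distribution rho = Q pi is a constant vector with some value c > 0. Hence D_rho = c I,
  and the scalar weight cancels: (Q^T (cI)^-1 Q)^-1 Q^T (cI)^-1 = c (Q^T Q)^-1 Q^T c^-1.
  Full column rank of Q makes Q^T Q invertible; this is needed because matrix_inv is
  a choice that carries no information on singular matrices.\<close>

lemma matrix_inv_unique:
  fixes M N :: "'a::semiring_1^'n^'n"
  assumes "M ** N = mat 1" "N ** M = mat 1"
  shows "matrix_inv M = N"
proof -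
  define P where "P = matrix_inv M"
  have "M ** P = mat 1" "P ** M = mat 1"
    using someI_ex[of "\<lambda>P. M ** P = mat 1 \<and> P ** M = mat 1"] assms
    unfolding P_def matrix_inv_def by blast+
  then have "P = (P ** M) ** N"
    using assms(1) by (metis matrix_mul_assoc matrix_mul_rid)
  then show ?thesis
    using \<open>P ** M = mat 1\<close> unfolding P_def by simp
qed

lemma matrix_inv_scaleR:
  fixes M :: "real^'n^'n"
  assumes "invertible M" "c \<noteq> 0"
  shows "matrix_inv (c *\<^sub>R M) = inverse c *\<^sub>R matrix_inv M"
proof -
  obtain N where "M ** N = mat 1" "N ** M = mat 1"
    using assms(1) unfolding invertible_def by blast
  moreover from this have "matrix_inv M = N"
    by (rule matrix_inv_unique)
  ultimately show ?thesis
    using assms(2) by (intro matrix_inv_unique) (simp_all add: matrix_scalar_ac)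
qed

lemma invertible_transpose_mult_self:
  fixes Q :: "real^'n^'m"
  assumes "rank Q = CARD('n)"
  shows "invertible (transpose Q ** Q)"
proof -
  have "x = 0" if "(transpose Q ** Q) *v x = 0" for x
  proof -
    have "(Q *v x) \<bullet> (Q *v x) = 0"
      using that by (metis dot_lmul_matrix inner_zero_left matrix_vector_mul_assoc
          transpose_matrix_vector)
    then have "Q *v x = Q *v 0"
      by simp
    then show "x = 0"
      using assms by (metis full_rank_injective injD)
  qed
  then obtain N where "N ** (transpose Q ** Q) = mat 1"
    using matrix_left_invertible_ker by blast
  then show ?thesis
    using invertible_left_inverse by blast
qed

lemma weighted_left_inverse_scalar_weight:
  fixes Q :: "real^'n^'m"
  assumes "rank Q = CARD('n)" "c \<noteq> 0"
  shows "matrix_inv (transpose Q ** matrix_inv (c *\<^sub>R mat 1) ** Q)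
           ** transpose Q ** matrix_inv (c *\<^sub>R mat 1)
         = matrix_inv (transpose Q ** Q) ** transpose Q"
proof -
  have weight_inv: "matrix_inv (c *\<^sub>R mat 1 :: real^'m^'m) = inverse c *\<^sub>R mat 1"
    using assms(2) by (intro matrix_inv_unique) (simp_all add: matrix_scalar_ac)
  have "transpose Q ** matrix_inv (c *\<^sub>R mat 1) ** Q = inverse c *\<^sub>R (transpose Q ** Q)"
    unfolding weight_inv by (metis matrix_mul_rid matrix_scalar_ac scalar_matrix_assoc)
  then have "matrix_inv (transpose Q ** matrix_inv (c *\<^sub>R mat 1) ** Q)
      = c *\<^sub>R matrix_inv (transpose Q ** Q)"
    using assms by (simp add: matrix_inv_scaleR invertible_transpose_mult_self)
  then show ?thesis
    using assms(2) by (simp add: weight_inv matrix_scalar_ac scalar_matrix_assoc)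
qed

lemma diag_mat_const: "diag_mat (\<chi> i. c) = c *\<^sub>R mat 1"
  by (simp add: diag_mat_def mat_def vec_eq_iff)

lemma matrix_vector_mult_uniform:
  fixes Q :: "real^'n^'m"
  assumes "\<And>i. (\<Sum>j\<in>UNIV. Q $ i $ j) = s"
  shows "Q *v (\<chi> j. 1 / real CARD('n)) = (\<chi> i. s / real CARD('n))"
  using assms by (simp add: matrix_vector_mult_def vec_eq_iff sum_divide_distrib[symmetric])

lemma incidence_mixture_nth:
  "(a *\<^sub>R incidence_matrix B + b *\<^sub>R (ones_mat - incidence_matrix B)) $ i $ j
     = (if j \<in> B i then a else b)"
  by (simp add: incidence_matrix_def ones_mat_def)

lemma sum_indicator_two_values:
  fixes S :: "'n::finite set"
  shows "(\<Sum>j\<in>UNIV. if j \<in> S then a else b)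
           = a * real (card S) + b * (real CARD('n) - real (card S))"
  by (simp add: sum.If_cases Collect_neg_eq Compl_eq_Diff_UNIV card_Diff_subset card_mono)

lemma bibd_replication_lt_card_blocks:
  assumes "is_bibd (B :: 'b::finite \<Rightarrow> 'v::finite set) r k lam" "k < CARD('v)"
  shows "r < CARD('b)"
proof (rule ccontr)
  assume "\<not> r < CARD('b)"
  moreover have "card {i. x \<in> B i} = r" for x
    using assms(1) unfolding is_bibd_def by blast
  ultimately have "{i. x \<in> B i} = UNIV" for x
    using card_seteq[of UNIV "{i. x \<in> B i}" for x] by auto
  then have "B i = UNIV" for i
    by blast
  then show False
    using assms unfolding is_bibd_def by auto
qed

theorem mainTheorem5:
  fixes B :: "'b::finite \<Rightarrow> 'v::finite set"
    and r k lam :: nat and \<theta> :: real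
    and A Q :: "real^'v^'b" and \<pi> :: "real^'v" and \<rho> :: "real^'b"
  assumes bibd: "is_bibd B r k lam"
    and kv: "k < CARD('v)"
    and A_def: "A = incidence_matrix B"
    and theta: "0 < \<theta>" "\<theta> < 1"
    and Q_def: "Q = (\<theta> / real r) *\<^sub>R A
                  + ((1 - \<theta>) / (real CARD('b) - real r)) *\<^sub>R (ones_mat - A)"
    and rankQ: "rank Q = CARD('v)"
    and pi_def: "\<pi> = (\<chi> j. 1 / real CARD('v))"
    and rho_def: "\<rho> = Q *v \<pi>"
  shows "matrix_inv (transpose Q ** matrix_inv (diag_mat \<rho>) ** Q)
           ** transpose Q ** matrix_inv (diag_mat \<rho>)
         = matrix_inv (transpose Q ** Q) ** transpose Q"
proof -
  define a1 where "a1 = \<theta> / real r"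
  define a2 where "a2 = (1 - \<theta>) / (real CARD('b) - real r)"
  define c where "c = (a1 * real k + a2 * (real CARD('v) - real k)) / real CARD('v)"
  have "r < CARD('b)"
    using bibd kv by (rule bibd_replication_lt_card_blocks)
  then have "c > 0"
    using theta kv unfolding c_def a1_def a2_def
    by (intro divide_pos_pos add_nonneg_pos) auto
  have "(\<Sum>j\<in>UNIV. Q $ i $ j) = a1 * real k + a2 * (real CARD('v) - real k)" for i
    using bibd unfolding Q_def A_def a1_def a2_def incidence_mixture_nth sum_indicator_two_values
      is_bibd_def by simp
  then have "diag_mat \<rho> = c *\<^sub>R mat 1"
    unfolding rho_def pi_def c_def by (simp add: matrix_vector_mult_uniform diag_mat_const)
  then show ?thesis
    using rankQ \<open>c > 0\<close> by (simp add: weighted_left_inverse_scalar_weight)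
qed

end
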